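(* Let $0<q<1$, let $I=[0,b)$ with $0<b\le\infty$, and let $R,S,T:I\to\mathbb{R}$ be continuous functions such that $1-(1-q)tR(t)>0$ and $1-(1-q)tT(t)>0$ for all $t\in I$. For $x\in I$ put $$\Lambda(x)=\mathbb{1}-(1-q)x\begin{pmatrix}R(x)&S(x)\\0&T(x)\end{pmatrix},\qquad \Lambda(x;q)_n=\Lambda(q^{n-1}x)\cdots\Lambda(qx)\Lambda(x).$$ Then for every $x\in I$ the limit $\Lambda(x;q)_\infty=\lim_{n\to\infty}\Lambda(x;q)_n$ exists and $$\Lambda(x;q)_\infty=\begin{pmatrix}\exp\Big(\frac{1}{1-q}\int_0^x\frac{\ln(1-(1-q)tR(t))}{t}\,d_qt\Big) & B(x)\\[1mm] 0 & \exp\Big(\frac{1}{1-q}\int_0^x\frac{\ln(1-(1-q)tT(t))}{t}\,d_qt\Big)\end{pmatrix},$$ where $$B(x)=-\exp\Big(\frac{1}{1-q}\int_0^x\frac{\ln(1-(1-q)tT(t))}{t}\,d_qt\Big)\int_0^x\frac{S(t)}{1-(1-q)tR(t)}\exp\Big(\frac{1}{1-q}\int_0^t\frac1s\ln\frac{1-(1-q)sR(s)}{1-(1-q)sT(s)}\,d_qs\Big)d_qt.$$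
   Context: The Jackson $q$-integral is $\int_0^x f(t)\,d_qt=\sum_{n=0}^\infty(1-q)q^nx\,f(q^nx)$. In the integrands $\ln(\cdot)/t$, the value at $t=0$ never occurs since the $q$-integral only samples $t=q^nx$; for $x=0$ all $q$-integrals are $0$. $\mathbb{1}$ denotes the $2\times2$ identity matrix. *)

theory Defs
  imports "HOL-Analysis.Analysis"
begin

definition jackson_integral :: "real \<Rightarrow> (real \<Rightarrow> real) \<Rightarrow> real \<Rightarrow> real" where
  "jackson_integral q f x = (\<Sum>n. (1 - q) * q ^ n * x * f (q ^ n * x))"

definition mat2 :: "real \<Rightarrow> real \<Rightarrow> real \<Rightarrow> real \<Rightarrow> real^2^2" where
  "mat2 a b c d = vector [vector [a, b], vector [c, d]]"

definition Lam :: "real \<Rightarrow> (real \<Rightarrow> real) \<Rightarrow> (real \<Rightarrow> real) \<Rightarrow> (real \<Rightarrow> real) \<Rightarrow> real \<Rightarrow> real^2^2" where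
  "Lam q R S T x = mat 1 - ((1 - q) * x) *\<^sub>R mat2 (R x) (S x) 0 (T x)"

fun Lam_prod :: "real \<Rightarrow> (real \<Rightarrow> real) \<Rightarrow> (real \<Rightarrow> real) \<Rightarrow> (real \<Rightarrow> real) \<Rightarrow> real \<Rightarrow> nat \<Rightarrow> real^2^2" where
  "Lam_prod q R S T x 0 = mat 1"
| "Lam_prod q R S T x (Suc n) = Lam q R S T (q ^ n * x) ** Lam_prod q R S T x n"

end

(* All factors Lambda(q^k x) are upper triangular, so Lambda(x;q)_n is upper triangular with
   diagonal entries A_n = prod_{k<n} r_k, D_n = prod_{k<n} t_k, where
   r_k = 1 - (1-q) q^k x R(q^k x), t_k = 1 - (1-q) q^k x T(q^k x), and with upper right entry
   A_n sum_{k<n} s_k D_k / A_{k+1}.  By continuity on [0,x], r_k - 1, t_k - 1 and s_k are O(q^k),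
   so the products converge to exp (sum_k ln r_k) and exp (sum_k ln t_k), and the series converges.
   These sums are exactly the Jackson sums of the theorem: the q-integral of ln(1-(1-q)tR(t))/t
   over [0,x] is (1-q) sum_k ln r_k, and the inner q-integral taken up to q^k x is the tail
   of that sum starting at k, i.e. it recovers A_k and D_k. *)

theory Submission
  imports Defs
begin

lemma mat2_nth [simp]:
  "mat2 a b c d $ 1 $ 1 = a" "mat2 a b c d $ 1 $ 2 = b"
  "mat2 a b c d $ 2 $ 1 = c" "mat2 a b c d $ 2 $ 2 = d"
  by (simp_all add: mat2_def)

lemma mat2_mult:
  "mat2 a b c d ** mat2 a' b' c' d' =
    mat2 (a * a' + b * c') (a * b' + b * d') (c * a' + d * c') (c * b' + d * d')"
  by (simp add: vec_eq_iff forall_2 matrix_matrix_mult_def sum_2)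

lemma mat_1_eq_mat2: "mat 1 = mat2 1 0 0 1"
  by (simp add: vec_eq_iff forall_2 mat_def)

lemma Lam_eq_mat2:
  "Lam q R S T y = mat2 (1 - (1 - q) * y * R y) (- ((1 - q) * y * S y)) 0 (1 - (1 - q) * y * T y)"
  by (simp add: Lam_def vec_eq_iff forall_2 mat_def algebra_simps)

lemma tendsto_mat2:
  assumes "(a \<longlongrightarrow> a0) F" "(b \<longlongrightarrow> b0) F" "(c \<longlongrightarrow> c0) F" "(d \<longlongrightarrow> d0) F"
  shows "((\<lambda>n. mat2 (a n) (b n) (c n) (d n)) \<longlongrightarrow> mat2 a0 b0 c0 d0) F"
proof (intro vec_tendstoI)
  fix i j :: 2
  show "((\<lambda>n. mat2 (a n) (b n) (c n) (d n) $ i $ j) \<longlongrightarrow> mat2 a0 b0 c0 d0 $ i $ j) F"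
    using assms exhaust_2[of i] exhaust_2[of j] by auto
qed

lemma upper_triangular_prod_eq:
  fixes r s t :: "nat \<Rightarrow> real" and P :: "nat \<Rightarrow> real^2^2"
  assumes "P 0 = mat 1" and "\<And>n. P (Suc n) = mat2 (r n) (s n) 0 (t n) ** P n"
    and "\<And>k. r k \<noteq> 0"
  shows "P n = mat2 (\<Prod>k<n. r k)
                    ((\<Prod>k<n. r k) * (\<Sum>k<n. s k * (\<Prod>i<k. t i) / (\<Prod>i<Suc k. r i)))
                    0 (\<Prod>k<n. t k)"
proof (induction n)
  case 0
  then show ?case using assms(1) by (simp add: mat_1_eq_mat2)
next
  case (Suc n)
  have "r n * ((\<Prod>k<n. r k) * (\<Sum>k<n. s k * (\<Prod>i<k. t i) / (\<Prod>i<Suc k. r i)))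
          + s n * (\<Prod>k<n. t k)
        = (\<Prod>k<Suc n. r k) * (\<Sum>k<Suc n. s k * (\<Prod>i<k. t i) / (\<Prod>i<Suc k. r i))"
    using assms(3) by (simp add: field_simps)
  then show ?case using Suc assms(2) by (simp add: mat2_mult mult.commute)
qed

lemma tendsto_prod_exp_suminf_ln:
  fixes r :: "nat \<Rightarrow> real"
  assumes "\<And>k. r k > 0" and "summable (\<lambda>k. ln (r k))"
  shows "(\<lambda>n. \<Prod>k<n. r k) \<longlonglongrightarrow> exp (\<Sum>k. ln (r k))"
proof -
  have "(\<lambda>n. \<Prod>k<n. r k) = (\<lambda>n. exp (\<Sum>k<n. ln (r k)))"
    using assms(1) by (simp add: exp_sum)
  then show ?thesis using summable_LIMSEQ[OF assms(2)] by (simp add: tendsto_exp)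
qed

lemma summable_ln_of_summable_abs_diff_one:
  fixes r :: "nat \<Rightarrow> real"
  assumes "\<And>k. r k > 0" and "summable (\<lambda>k. \<bar>r k - 1\<bar>)"
  shows "summable (\<lambda>k. ln (r k))"
  using assms by (intro summable_ln_real abs_convergent_prod_imp_convergent_prod
      summable_imp_abs_convergent_prod) auto

lemma summable_upper_triangular_coeffs:
  fixes r s t :: "nat \<Rightarrow> real"
  assumes "\<And>k. r k > 0" and "\<And>k. t k > 0"
    and "summable (\<lambda>k. \<bar>r k - 1\<bar>)" "summable (\<lambda>k. \<bar>t k - 1\<bar>)"
    and s_summable: "summable (\<lambda>k. \<bar>s k\<bar>)"
  shows "summable (\<lambda>k. s k * (\<Prod>i<k. t i) / (\<Prod>i<Suc k. r i))"
proof -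
  have "(\<lambda>k. (\<Prod>i<k. t i) / (\<Prod>i<Suc k. r i)) \<longlonglongrightarrow> exp (\<Sum>k. ln (t k)) / exp (\<Sum>k. ln (r k))"
    using assms by (intro tendsto_divide LIMSEQ_Suc tendsto_prod_exp_suminf_ln
        summable_ln_of_summable_abs_diff_one) auto
  then have "Bseq (\<lambda>k. (\<Prod>i<k. t i) / (\<Prod>i<Suc k. r i))"
    by (intro convergent_imp_Bseq convergentI)
  then obtain K where K: "\<And>k. \<bar>(\<Prod>i<k. t i) / (\<Prod>i<Suc k. r i)\<bar> \<le> K"
    unfolding Bseq_def by auto
  show ?thesis
  proof (rule summable_comparison_test')
    show "summable (\<lambda>k. K * \<bar>s k\<bar>)" using s_summable by simp
    show "norm (s k * (\<Prod>i<k. t i) / (\<Prod>i<Suc k. r i)) \<le> K * \<bar>s k\<bar>" for k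
      using mult_left_mono[OF K[of k], of "\<bar>s k\<bar>"] by (simp add: abs_mult mult.commute)
  qed
qed

lemma upper_triangular_prod_tendsto:
  fixes r s t :: "nat \<Rightarrow> real" and P :: "nat \<Rightarrow> real^2^2"
  assumes "P 0 = mat 1" and "\<And>n. P (Suc n) = mat2 (r n) (s n) 0 (t n) ** P n"
    and r_pos: "\<And>k. r k > 0" and "\<And>k. t k > 0"
    and "summable (\<lambda>k. \<bar>r k - 1\<bar>)" "summable (\<lambda>k. \<bar>t k - 1\<bar>)"
    and "summable (\<lambda>k. \<bar>s k\<bar>)"
  shows "P \<longlonglongrightarrow> mat2 (exp (\<Sum>k. ln (r k)))
                     (exp (\<Sum>k. ln (r k)) * (\<Sum>k. s k * (\<Prod>i<k. t i) / (\<Prod>i<Suc k. r i)))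
                     0 (exp (\<Sum>k. ln (t k)))"
proof -
  have A: "(\<lambda>n. \<Prod>k<n. r k) \<longlonglongrightarrow> exp (\<Sum>k. ln (r k))"
    using assms by (intro tendsto_prod_exp_suminf_ln summable_ln_of_summable_abs_diff_one)
  have D: "(\<lambda>n. \<Prod>k<n. t k) \<longlonglongrightarrow> exp (\<Sum>k. ln (t k))"
    using assms by (intro tendsto_prod_exp_suminf_ln summable_ln_of_summable_abs_diff_one)
  have B: "(\<lambda>n. (\<Prod>k<n. r k) * (\<Sum>k<n. s k * (\<Prod>i<k. t i) / (\<Prod>i<Suc k. r i)))
      \<longlonglongrightarrow> exp (\<Sum>k. ln (r k)) * (\<Sum>k. s k * (\<Prod>i<k. t i) / (\<Prod>i<Suc k. r i))"
    using assms by (intro tendsto_mult A summable_LIMSEQ summable_upper_triangular_coeffs)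
  have "r k \<noteq> 0" for k
    using r_pos[of k] by simp
  then have "P = (\<lambda>n. mat2 (\<Prod>k<n. r k)
                    ((\<Prod>k<n. r k) * (\<Sum>k<n. s k * (\<Prod>i<k. t i) / (\<Prod>i<Suc k. r i)))
                    0 (\<Prod>k<n. t k))"
    by (intro ext upper_triangular_prod_eq[OF assms(1,2)])
  then show ?thesis by (simp only:) (intro tendsto_mat2 A B D tendsto_const)
qed

lemma summable_jackson_integral_abs:
  fixes f :: "real \<Rightarrow> real"
  assumes "continuous_on {0..x} f" and "0 \<le> x" "0 \<le> q" "q < 1"
  shows "summable (\<lambda>n. \<bar>(1 - q) * q ^ n * x * f (q ^ n * x)\<bar>)"
proof -
  obtain M where M: "\<forall>y\<in>{0..x}. \<bar>f y\<bar> \<le> M"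
    using compact_imp_bounded[OF compact_continuous_image[OF assms(1) compact_Icc]]
    unfolding bounded_iff by auto
  have lattice: "q ^ n * x \<in> {0..x}" for n
    using assms by (auto simp: mult_left_le_one_le power_le_one)
  have bound: "\<bar>(1 - q) * q ^ n * x * f (q ^ n * x)\<bar> \<le> (1 - q) * x * M * q ^ n" for n
  proof -
    have "\<bar>(1 - q) * q ^ n * x * f (q ^ n * x)\<bar> = (1 - q) * q ^ n * x * \<bar>f (q ^ n * x)\<bar>"
      using assms by (simp add: abs_mult)
    also have "\<dots> \<le> (1 - q) * q ^ n * x * M"
      using M lattice assms by (intro mult_left_mono) auto
    finally show ?thesis by (simp only: mult_ac)
  qed
  have "summable (\<lambda>n. (1 - q) * x * M * q ^ n)"
    using assms by (intro summable_mult summable_geometric) auto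
  then show ?thesis
    by (rule summable_comparison_test') (simp add: bound)
qed

(* For x = 0 every sample point is 0 and g 0 / 0 = 0, so the identity needs g 0 = 0. *)
lemma jackson_integral_div_self:
  fixes g :: "real \<Rightarrow> real"
  assumes "q \<noteq> 0" and "g 0 = 0" and "summable (\<lambda>n. g (q ^ n * x))"
  shows "jackson_integral q (\<lambda>t. g t / t) x = (1 - q) * (\<Sum>n. g (q ^ n * x))"
proof -
  have "(1 - q) * q ^ n * x * (g (q ^ n * x) / (q ^ n * x)) = (1 - q) * g (q ^ n * x)" for n
    using assms(1,2) by (cases "x = 0") auto
  then show ?thesis using suminf_mult[OF assms(3)] by (simp add: jackson_integral_def)
qed

lemma exp_jackson_integral_ln_div:
  fixes \<rho> :: "real \<Rightarrow> real"
  assumes "0 < q" "q < 1" and "\<rho> 0 = 1" and "\<And>n. \<rho> (q ^ n * x) > 0"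
    and summable: "summable (\<lambda>n. ln (\<rho> (q ^ n * x)))"
  shows "exp (1 / (1 - q) * jackson_integral q (\<lambda>t. ln (\<rho> t) / t) (q ^ k * x))
       = exp (\<Sum>n. ln (\<rho> (q ^ n * x))) / (\<Prod>n<k. \<rho> (q ^ n * x))"
proof -
  have shift: "q ^ n * (q ^ k * x) = q ^ (n + k) * x" for n
    by (simp add: power_add)
  have "1 / (1 - q) * jackson_integral q (\<lambda>t. ln (\<rho> t) / t) (q ^ k * x)
      = (\<Sum>n. ln (\<rho> (q ^ (n + k) * x)))"
    using assms summable_ignore_initial_segment[OF summable, of k]
    by (simp add: jackson_integral_div_self[of q "\<lambda>t. ln (\<rho> t)"] shift)
  also have "\<dots> = (\<Sum>n. ln (\<rho> (q ^ n * x))) - (\<Sum>n<k. ln (\<rho> (q ^ n * x)))"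
    using suminf_minus_initial_segment[OF summable] .
  finally show ?thesis
    using assms(4) by (simp add: exp_diff exp_sum)
qed

lemma exp_jackson_integral_ln_quotient:
  fixes \<rho> \<sigma> :: "real \<Rightarrow> real"
  assumes "0 < q" "q < 1" and "\<rho> 0 = 1" "\<sigma> 0 = 1"
    and \<rho>_pos: "\<And>n. \<rho> (q ^ n * x) > 0" and \<sigma>_pos: "\<And>n. \<sigma> (q ^ n * x) > 0"
    and "summable (\<lambda>n. ln (\<rho> (q ^ n * x)))" "summable (\<lambda>n. ln (\<sigma> (q ^ n * x)))"
  shows "exp (1 / (1 - q) * jackson_integral q (\<lambda>s. (1 / s) * ln (\<rho> s / \<sigma> s)) (q ^ k * x))
       = exp (\<Sum>n. ln (\<rho> (q ^ n * x))) / exp (\<Sum>n. ln (\<sigma> (q ^ n * x)))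
         * (\<Prod>n<k. \<sigma> (q ^ n * x)) / (\<Prod>n<k. \<rho> (q ^ n * x))"
proof -
  have ln_quotient: "ln (\<rho> (q ^ n * x) / \<sigma> (q ^ n * x)) = ln (\<rho> (q ^ n * x)) - ln (\<sigma> (q ^ n * x))" for n
    using \<rho>_pos \<sigma>_pos by (simp add: ln_divide_pos)
  have "summable (\<lambda>n. ln (\<rho> (q ^ n * x) / \<sigma> (q ^ n * x)))"
    "(\<Sum>n. ln (\<rho> (q ^ n * x) / \<sigma> (q ^ n * x)))
       = (\<Sum>n. ln (\<rho> (q ^ n * x))) - (\<Sum>n. ln (\<sigma> (q ^ n * x)))"
    using assms unfolding ln_quotient by (simp_all add: summable_diff suminf_diff)
  then have "exp (1 / (1 - q) * jackson_integral q (\<lambda>s. ln (\<rho> s / \<sigma> s) / s) (q ^ k * x))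
      = exp ((\<Sum>n. ln (\<rho> (q ^ n * x))) - (\<Sum>n. ln (\<sigma> (q ^ n * x))))
        / (\<Prod>n<k. \<rho> (q ^ n * x) / \<sigma> (q ^ n * x))"
    using exp_jackson_integral_ln_div[of q "\<lambda>s. \<rho> s / \<sigma> s" x k] assms by simp
  then show ?thesis
    by (simp add: exp_diff prod_dividef)
qed

theorem proposition1:
  fixes q :: real and b :: ereal and R S T :: "real \<Rightarrow> real"
  defines "I \<equiv> {t::real. 0 \<le> t \<and> ereal t < b}"
  assumes q: "0 < q" "q < 1"
    and b: "0 < b"
    and cont: "continuous_on I R" "continuous_on I S" "continuous_on I T"
    and posR: "\<And>t. t \<in> I \<Longrightarrow> 1 - (1 - q) * t * R t > 0"
    and posT: "\<And>t. t \<in> I \<Longrightarrow> 1 - (1 - q) * t * T t > 0"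
    and x: "x \<in> I"
  shows "(\<lambda>n. Lam_prod q R S T x n) \<longlonglongrightarrow>
    mat2 (exp (1 / (1 - q) * jackson_integral q (\<lambda>t. ln (1 - (1 - q) * t * R t) / t) x))
         (- exp (1 / (1 - q) * jackson_integral q (\<lambda>t. ln (1 - (1 - q) * t * T t) / t) x)
            * jackson_integral q (\<lambda>t. S t / (1 - (1 - q) * t * R t)
                 * exp (1 / (1 - q) * jackson_integral q
                     (\<lambda>s. (1 / s) * ln ((1 - (1 - q) * s * R s) / (1 - (1 - q) * s * T s))) t)) x)
         0
         (exp (1 / (1 - q) * jackson_integral q (\<lambda>t. ln (1 - (1 - q) * t * T t) / t) x))"
proof -
  have x0: "0 \<le> x" and sub: "{0..x} \<subseteq> I"
    using x unfolding I_def by (auto intro: order.strict_trans1[rotated])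
  have lattice: "q ^ k * x \<in> I" for k
    using sub x0 q by (auto simp: mult_left_le_one_le power_le_one)
  define diagR where "diagR y = 1 - (1 - q) * y * R y" for y
  define diagT where "diagT y = 1 - (1 - q) * y * T y" for y
  define r where "r k = diagR (q ^ k * x)" for k
  define t where "t k = diagT (q ^ k * x)" for k
  define s where "s k = - ((1 - q) * (q ^ k * x) * S (q ^ k * x))" for k
  define c where "c k = s k * (\<Prod>i<k. t i) / (\<Prod>i<Suc k. r i)" for k
  define LR where "LR = (\<Sum>k. ln (r k))"
  define LT where "LT = (\<Sum>k. ln (t k))"
  have r_pos: "r k > 0" and t_pos: "t k > 0" for k
    using posR posT lattice unfolding r_def t_def diagR_def diagT_def by auto
  have jackson_abs: "summable (\<lambda>n. \<bar>(1 - q) * q ^ n * x * F (q ^ n * x)\<bar>)"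
    if "continuous_on I F" for F
    using summable_jackson_integral_abs[OF continuous_on_subset[OF that sub] x0] q by simp
  have abs_summable: "summable (\<lambda>k. \<bar>r k - 1\<bar>)" "summable (\<lambda>k. \<bar>t k - 1\<bar>)"
    "summable (\<lambda>k. \<bar>s k\<bar>)"
    using jackson_abs[OF cont(1)] jackson_abs[OF cont(3)] jackson_abs[OF cont(2)]
    by (simp_all add: r_def t_def s_def diagR_def diagT_def mult.assoc)
  have ln_summable: "summable (\<lambda>k. ln (r k))" "summable (\<lambda>k. ln (t k))"
    using abs_summable r_pos t_pos by (simp_all add: summable_ln_of_summable_abs_diff_one)
  have lim: "(\<lambda>n. Lam_prod q R S T x n) \<longlonglongrightarrow> mat2 (exp LR) (exp LR * (\<Sum>k. c k)) 0 (exp LT)"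
    unfolding LR_def LT_def c_def[abs_def]
    by (rule upper_triangular_prod_tendsto[OF _ _ r_pos t_pos abs_summable])
      (simp_all add: Lam_eq_mat2 r_def s_def t_def diagR_def diagT_def)
  have E_R: "exp (1 / (1 - q) * jackson_integral q (\<lambda>t. ln (diagR t) / t) x) = exp LR"
    using exp_jackson_integral_ln_div[of q diagR x 0] q r_pos ln_summable
    by (simp add: LR_def r_def diagR_def)
  have E_T: "exp (1 / (1 - q) * jackson_integral q (\<lambda>t. ln (diagT t) / t) x) = exp LT"
    using exp_jackson_integral_ln_div[of q diagT x 0] q t_pos ln_summable
    by (simp add: LT_def t_def diagT_def)
  have E_quotient: "exp (1 / (1 - q) * jackson_integral q
        (\<lambda>s. (1 / s) * ln (diagR s / diagT s)) (q ^ k * x))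
      = exp LR / exp LT * (\<Prod>i<k. t i) / (\<Prod>i<k. r i)" for k
    using exp_jackson_integral_ln_quotient[of q diagR diagT x k] q r_pos t_pos ln_summable
    by (simp add: LR_def LT_def r_def t_def diagR_def diagT_def)
  have J_S: "jackson_integral q (\<lambda>t. S t / diagR t * exp (1 / (1 - q) * jackson_integral q
        (\<lambda>s. (1 / s) * ln (diagR s / diagT s)) t)) x = - (exp LR / exp LT) * (\<Sum>k. c k)"
    (is "jackson_integral q ?f x = _")
  proof -
    have c_summable: "summable c"
      unfolding c_def by (rule summable_upper_triangular_coeffs[OF r_pos t_pos abs_summable])
    have summand: "(1 - q) * q ^ k * x * ?f (q ^ k * x) = - (exp LR / exp LT) * c k" for k
      unfolding E_quotient r_def[symmetric] using r_pos[of k] prod_pos[of "{..<k}" r] r_pos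
      by (simp add: c_def s_def field_simps) (simp add: minus_divide_left algebra_simps)
    show ?thesis
      unfolding jackson_integral_def[of q ?f x] summand by (rule suminf_mult[OF c_summable])
  qed
  have "- exp LT * (- (exp LR / exp LT) * (\<Sum>k. c k)) = exp LR * (\<Sum>k. c k)"
    by simp
  with lim show ?thesis
    using E_R E_T J_S unfolding diagR_def diagT_def by (simp only:)
qed

end
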